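(* Let $p>q$ be primes and let $G$ be a transitive permutation group of degree $pq$ containing a transitive subgroup $H$ which is imprimitive with $q$ blocks of size $p$ (i.e. $H$ preserves a partition of the underlying set into $q$ blocks of size $p$). Then $\rho(G)=1$.
   Context: For a permutation group $G$ on a set $V$, two elements $g,h\in G$ are intersecting if $g(v)=h(v)$ for some $v\in V$; a subset $\mathcal{F}\subseteq G$ is intersecting if every pair of its elements is intersecting. The intersection density of $G$ is $\rho(G)=\max\{|\mathcal{F}|:\mathcal{F}\subseteq G \text{ intersecting}\}/\max_{v\in V}|G_v|$, where $G_v$ is the stabilizer of $v$. *)

theory Defs
  imports Complex_Main "HOL-Combinatorics.Permutations" "HOL-Computational_Algebra.Primes"
begin

definition perm_group :: "'a set \<Rightarrow> ('a \<Rightarrow> 'a) set \<Rightarrow> bool" where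
  "perm_group V G \<longleftrightarrow> finite V \<and> (\<forall>g\<in>G. g permutes V) \<and> id \<in> G \<and>
     (\<forall>g\<in>G. \<forall>h\<in>G. g \<circ> h \<in> G) \<and> (\<forall>g\<in>G. inv g \<in> G)"

definition transitive_on :: "'a set \<Rightarrow> ('a \<Rightarrow> 'a) set \<Rightarrow> bool" where
  "transitive_on V G \<longleftrightarrow> (\<forall>u\<in>V. \<forall>v\<in>V. \<exists>g\<in>G. g u = v)"

definition stabilizer :: "('a \<Rightarrow> 'a) set \<Rightarrow> 'a \<Rightarrow> ('a \<Rightarrow> 'a) set" where
  "stabilizer G v = {g\<in>G. g v = v}"

definition intersecting :: "'a set \<Rightarrow> ('a \<Rightarrow> 'a) set \<Rightarrow> bool" where
  "intersecting V F \<longleftrightarrow> (\<forall>g\<in>F. \<forall>h\<in>F. \<exists>v\<in>V. g v = h v)"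

definition intersection_density :: "'a set \<Rightarrow> ('a \<Rightarrow> 'a) set \<Rightarrow> real" where
  "intersection_density V G =
     real (Max {card F | F. F \<subseteq> G \<and> intersecting V F}) /
     real (Max {card (stabilizer G v) | v. v \<in> V})"

definition block_system :: "'a set \<Rightarrow> ('a \<Rightarrow> 'a) set \<Rightarrow> 'a set set \<Rightarrow> nat \<Rightarrow> nat \<Rightarrow> bool" where
  "block_system V H P q p \<longleftrightarrow> \<Union>P = V \<and> (\<forall>B\<in>P. \<forall>C\<in>P. B \<noteq> C \<longrightarrow> B \<inter> C = {}) \<and>
     card P = q \<and> (\<forall>B\<in>P. card B = p) \<and> (\<forall>h\<in>H. \<forall>B\<in>P. h ` B \<in> P)"

end

(* The derangement graph of G has a clique of size |V| = pq inside H: take x in a Sylow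
   p-subgroup of H acting as a p-cycle on every block (it exists because q < p forces the
   Sylow p-subgroup to fix all blocks, and a counting argument leaves an element without fixed
   points), and y in a Sylow q-subgroup of H permuting the q blocks cyclically. The elements
   x^i y^j, i < p, j < q, pairwise disagree everywhere, so by the clique-coclique bound every
   intersecting family has at most |G| / pq = |G_v| elements, which the point stabilizers
   attain. *)
theory Submission
  imports Defs "HOL-Algebra.Sylow" "HOL-Algebra.Multiplicative_Group"
begin

lemma perm_group_permutes: "perm_group V S \<Longrightarrow> g \<in> S \<Longrightarrow> g permutes V"
  unfolding perm_group_def by blast

lemma perm_group_finite: "perm_group V S \<Longrightarrow> finite S"
  unfolding perm_group_def
  by (metis (mono_tags, lifting) finite_permutations finite_subset mem_Collect_eq subsetI)

(* HOL-Algebra reserves inv for the group inverse, so the inverse function is written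
   inv_into UNIV. *)
lemma perm_group_inv_comp:
  assumes "perm_group V S" "g \<in> S"
  shows "inv_into UNIV g \<circ> g = id" "g \<circ> inv_into UNIV g = id"
  using perm_group_permutes[OF assms] by (simp_all add: permutes_inv_o)

lemma perm_group_funpow_closed:
  assumes "perm_group V S" "g \<in> S"
  shows "g ^^ k \<in> S"
proof (induction k)
  case 0
  show ?case using assms(1) unfolding perm_group_def by (simp only: funpow.simps)
next
  case (Suc k)
  then show ?case using assms unfolding perm_group_def by (simp only: funpow.simps)
qed

definition perm_monoid :: "('a \<Rightarrow> 'a) set \<Rightarrow> ('a \<Rightarrow> 'a) monoid" where
  "perm_monoid S = \<lparr>carrier = S, mult = (\<circ>), one = id\<rparr>"

lemma perm_monoid_simps [simp]:
  "carrier (perm_monoid S) = S" "mult (perm_monoid S) = (\<circ>)" "one (perm_monoid S) = id"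
  "order (perm_monoid S) = card S"
  by (simp_all add: perm_monoid_def order_def)

lemma group_perm_monoid:
  assumes "perm_group V S"
  shows "group (perm_monoid S)"
proof (rule groupI)
  fix g assume "g \<in> carrier (perm_monoid S)"
  then have "g \<in> S" "inv_into UNIV g \<in> S"
    using assms by (auto simp: perm_group_def)
  then show "\<exists>h\<in>carrier (perm_monoid S). h \<otimes>\<^bsub>perm_monoid S\<^esub> g = \<one>\<^bsub>perm_monoid S\<^esub>"
    using perm_group_inv_comp(1)[OF assms] by auto
qed (use assms in \<open>simp_all add: perm_group_def o_assoc\<close>)

lemma perm_monoid_pow: "g [^]\<^bsub>perm_monoid S\<^esub> (k::nat) = g ^^ k"
  by (induction k) (auto simp: nat_pow_def funpow_swap1)

lemma perm_monoid_inv: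
  assumes "perm_group V S" "g \<in> S"
  shows "inv\<^bsub>perm_monoid S\<^esub> g = inv_into UNIV g"
proof -
  interpret group "perm_monoid S" by (rule group_perm_monoid[OF assms(1)])
  show ?thesis
    using assms perm_group_inv_comp(1)[OF assms]
    by (intro inv_equality) (auto simp: perm_group_def)
qed

lemma subgroup_perm_monoid_iff:
  assumes "perm_group V K" "S \<subseteq> K"
  shows "subgroup S (perm_monoid K) \<longleftrightarrow> perm_group V S"
proof
  assume sub: "subgroup S (perm_monoid K)"
  have "inv_into UNIV g \<in> S" if "g \<in> S" for g
    using subgroup.m_inv_closed[OF sub that] perm_monoid_inv[OF assms(1)] that assms(2) by auto
  then show "perm_group V S"
    using assms subgroup.m_closed[OF sub] subgroup.one_closed[OF sub]
    by (auto simp: perm_group_def)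
next
  assume "perm_group V S"
  then show "subgroup S (perm_monoid K)"
    using assms perm_monoid_inv[OF assms(1)]
    by (auto simp: subgroup_def perm_group_def)
qed

lemma funpow_card_eq_id:
  assumes "perm_group V S" "g \<in> S"
  shows "g ^^ card S = id"
proof -
  interpret group "perm_monoid S" by (rule group_perm_monoid[OF assms(1)])
  have "g [^]\<^bsub>perm_monoid S\<^esub> order (perm_monoid S) = \<one>\<^bsub>perm_monoid S\<^esub>"
    using assms by (intro pow_order_eq_1) (simp_all add: perm_group_finite)
  then show ?thesis by (simp add: perm_monoid_pow)
qed

lemma perm_group_card_dvd:
  assumes "perm_group V K" "perm_group V S" "S \<subseteq> K"
  shows "card S dvd card K"
proof -
  interpret group "perm_monoid K" by (rule group_perm_monoid[OF assms(1)])
  have "subgroup S (perm_monoid K)"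
    using subgroup_perm_monoid_iff assms by blast
  then have "card (rcosets\<^bsub>perm_monoid K\<^esub> S) * card S = card K"
    using lagrange by simp
  then show ?thesis by (metis dvd_triv_right)
qed

definition sylow_subgroup :: "'a set \<Rightarrow> ('a \<Rightarrow> 'a) set \<Rightarrow> nat \<Rightarrow> ('a \<Rightarrow> 'a) set \<Rightarrow> bool" where
  "sylow_subgroup V K r S \<longleftrightarrow> perm_group V S \<and> S \<subseteq> K \<and> card S = r ^ multiplicity r (card K)"

lemma perm_group_sylow:
  assumes "perm_group V K" "prime r"
  obtains S where "sylow_subgroup V K r S"
proof -
  obtain m where "order (perm_monoid K) = r ^ multiplicity r (card K) * m"
    using multiplicity_dvd[of r "card K"] by (auto elim!: dvdE)
  moreover have "finite (carrier (perm_monoid K))"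
    using perm_group_finite[OF assms(1)] by simp
  ultimately obtain S where S: "subgroup S (perm_monoid K)" "card S = r ^ multiplicity r (card K)"
    using sylow_thm[OF assms(2) group_perm_monoid[OF assms(1)]] by blast
  moreover have "S \<subseteq> K"
    using subgroup.subset[OF S(1)] by simp
  ultimately show ?thesis
    using that subgroup_perm_monoid_iff[OF assms(1)] by (auto simp: sylow_subgroup_def)
qed

lemma sylow_subgroup_funpow_eq_id:
  assumes "sylow_subgroup V K r S" "g \<in> S"
  shows "g ^^ (r ^ multiplicity r (card K)) = id"
  using funpow_card_eq_id[of V S g] assms by (simp add: sylow_subgroup_def)

definition perm_action :: "(('a \<Rightarrow> 'a) \<Rightarrow> 'b \<Rightarrow> 'b) \<Rightarrow> bool" where
  "perm_action f \<longleftrightarrow> f id = id \<and> (\<forall>g h. f (g \<circ> h) = f g \<circ> f h)"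

lemma perm_action_apply: "perm_action (\<lambda>g. g)"
  by (simp add: perm_action_def)

lemma perm_action_image: "perm_action (\<lambda>g B. g ` B)"
  by (simp add: perm_action_def fun_eq_iff image_comp)

lemma perm_action_funpow:
  assumes "perm_action f"
  shows "f g ^^ k = f (g ^^ k)"
  using assms by (induction k) (simp_all add: perm_action_def)

lemma perm_action_inv_cancel:
  assumes "perm_group V S" "g \<in> S" "perm_action f"
  shows "f (inv_into UNIV g) (f g u) = u"
proof -
  have "f (inv_into UNIV g) (f g u) = f (inv_into UNIV g \<circ> g) u"
    using assms(3) by (simp add: perm_action_def)
  then show ?thesis
    using assms(3) by (simp add: perm_group_inv_comp(1)[OF assms(1,2)] perm_action_def)
qed

lemma perm_group_stabilizer:
  assumes "perm_group V S" "perm_action f"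
  shows "perm_group V {g\<in>S. f g u = u}"
proof -
  have "f (inv_into UNIV g) u = u" if "g \<in> S" "f g u = u" for g
    using perm_action_inv_cancel[OF assms(1) that(1) assms(2), of u] that(2) by simp
  moreover have "f (g \<circ> h) u = u" if "f g u = u" "f h u = u" for g h
    using assms(2) that by (simp add: perm_action_def)
  ultimately show ?thesis
    using assms unfolding perm_group_def perm_action_def by auto
qed

lemma orbit_stabilizer:
  assumes S: "perm_group V S" and f: "perm_action f"
  shows "card S = card ((\<lambda>g. f g u) ` S) * card {g\<in>S. f g u = u}"
proof -
  define St where "St = {g\<in>S. f g u = u}"
  have fiber: "{g\<in>S. f g u = f h u} = (\<lambda>s. h \<circ> s) ` St" if h: "h \<in> S" for h
  proof (intro equalityI subsetI)
    fix g assume "g \<in> {g\<in>S. f g u = f h u}"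
    then have g: "g \<in> S" "f g u = f h u" by auto
    define s where "s = inv_into UNIV h \<circ> g"
    have "f s u = f (inv_into UNIV h) (f h u)"
      using f g(2) by (simp add: s_def perm_action_def)
    then have "s \<in> St"
      using S g(1) h perm_action_inv_cancel[OF S h f] by (simp add: s_def St_def perm_group_def)
    moreover have "g = h \<circ> s"
      by (simp add: s_def o_assoc perm_group_inv_comp(2)[OF S h])
    ultimately show "g \<in> (\<lambda>s. h \<circ> s) ` St" by blast
  qed (use S h f in \<open>auto simp: St_def perm_group_def perm_action_def\<close>)
  have card_fiber: "card {g\<in>S. f g u = f h u} = card St" if h: "h \<in> S" for h
  proof -
    have "inj_on (\<lambda>s. h \<circ> s) St"
    proof
      fix s1 s2 assume "h \<circ> s1 = h \<circ> s2"
      then have "inv_into UNIV h \<circ> (h \<circ> s1) = inv_into UNIV h \<circ> (h \<circ> s2)" by simp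
      then show "s1 = s2" by (simp add: o_assoc perm_group_inv_comp(1)[OF S h])
    qed
    then show ?thesis by (simp add: fiber[OF h] card_image)
  qed
  have "S = (\<Union>w\<in>(\<lambda>g. f g u) ` S. {g\<in>S. f g u = w})" by auto
  then have "card S = card (\<Union>w\<in>(\<lambda>g. f g u) ` S. {g\<in>S. f g u = w})" by simp
  also have "\<dots> = (\<Sum>w\<in>(\<lambda>g. f g u) ` S. card {g\<in>S. f g u = w})"
    by (rule card_UN_disjoint) (use perm_group_finite[OF S] in auto)
  also have "\<dots> = (\<Sum>w\<in>(\<lambda>g. f g u) ` S. card St)"
    by (rule sum.cong) (auto simp: card_fiber)
  finally show ?thesis by (simp add: St_def)
qed

lemma card_transitive_perm_group:
  assumes "perm_group V K" "transitive_on V K" "v \<in> V"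
  shows "card K = card V * card (stabilizer K v)"
proof -
  have "(\<lambda>g. g v) ` K = V"
  proof
    show "(\<lambda>g. g v) ` K \<subseteq> V"
      using assms(1,3) unfolding perm_group_def by (auto dest: permutes_in_image)
    show "V \<subseteq> (\<lambda>g. g v) ` K"
      using assms(2,3) unfolding transitive_on_def by force
  qed
  then show ?thesis
    using orbit_stabilizer[OF assms(1) perm_action_apply, of v] by (simp add: stabilizer_def)
qed

lemma intersecting_card_mult_le:
  assumes G: "perm_group V G" and I: "finite I" and c: "c ` I \<subseteq> G"
    and c_apart: "\<And>i j v. i \<in> I \<Longrightarrow> j \<in> I \<Longrightarrow> v \<in> V \<Longrightarrow> c i v = c j v \<Longrightarrow> i = j"
    and F: "F \<subseteq> G" "intersecting V F"
  shows "card F * card I \<le> card G"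
proof -
  \<comment> \<open>Double count the pairs (i, g) with g \<circ> c i \<in> F: every i has card F of them, and every
    g at most one, because F is intersecting while the c i disagree everywhere.\<close>
  define R where "R = {(i, g). i \<in> I \<and> g \<in> G \<and> g \<circ> c i \<in> F}"
  have finG: "finite G" by (rule perm_group_finite[OF G])
  have row: "card {g\<in>G. g \<circ> c i \<in> F} = card F" if i: "i \<in> I" for i
  proof -
    have ci: "c i \<in> G" using c i by blast
    have "bij_betw (\<lambda>g. g \<circ> c i) {g\<in>G. g \<circ> c i \<in> F} F"
    proof (rule bij_betw_imageI)
      show "inj_on (\<lambda>g. g \<circ> c i) {g\<in>G. g \<circ> c i \<in> F}"
      proof
        fix g1 g2 assume "g1 \<circ> c i = g2 \<circ> c i"
        then have "g1 \<circ> c i \<circ> inv_into UNIV (c i) = g2 \<circ> c i \<circ> inv_into UNIV (c i)" by simp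
        then show "g1 = g2" by (simp add: o_assoc[symmetric] perm_group_inv_comp(2)[OF G ci])
      qed
      have "f \<circ> inv_into UNIV (c i) \<in> G" "f \<circ> inv_into UNIV (c i) \<circ> c i = f" if "f \<in> F" for f
        using G F(1) ci that
        by (auto simp: perm_group_def o_assoc[symmetric] perm_group_inv_comp(1)[OF G ci])
      then show "(\<lambda>g. g \<circ> c i) ` {g\<in>G. g \<circ> c i \<in> F} = F"
        by (auto intro!: image_eqI)
    qed
    then show ?thesis by (rule bij_betw_same_card)
  qed
  have column: "card {i\<in>I. g \<circ> c i \<in> F} \<le> 1" if g: "g \<in> G" for g
  proof -
    have "i = j" if ij: "i \<in> I" "j \<in> I" "g \<circ> c i \<in> F" "g \<circ> c j \<in> F" for i j
    proof -
      obtain v where "v \<in> V" "g (c i v) = g (c j v)"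
        using F(2) ij(3,4) unfolding intersecting_def by fastforce
      then show "i = j"
        using c_apart ij(1,2) permutes_inj[OF perm_group_permutes[OF G g]] by (meson injD)
    qed
    then show ?thesis using I by (auto simp: card_le_Suc0_iff_eq)
  qed
  have "R = (SIGMA i:I. {g\<in>G. g \<circ> c i \<in> F})" by (auto simp: R_def)
  then have "card R = card F * card I" using I finG by (simp add: row)
  moreover have "prod.swap ` R = (SIGMA g:G. {i\<in>I. g \<circ> c i \<in> F})" by (auto simp: R_def)
  then have "card R = (\<Sum>g\<in>G. card {i\<in>I. g \<circ> c i \<in> F})"
    using I finG card_image[of prod.swap R] by (simp add: card_SigmaI)
  moreover have "\<dots> \<le> (\<Sum>g\<in>G. 1)"
    by (rule sum_mono) (rule column)
  ultimately show ?thesis by simp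
qed

lemma intersection_density_eq_1I:
  assumes G: "perm_group V G" and "V \<noteq> {}"
    and bound: "\<And>F. F \<subseteq> G \<Longrightarrow> intersecting V F \<Longrightarrow> \<exists>v\<in>V. card F \<le> card (stabilizer G v)"
  shows "intersection_density V G = 1"
proof -
  let ?stabs = "{card (stabilizer G v) | v. v \<in> V}"
  let ?families = "{card F | F. F \<subseteq> G \<and> intersecting V F}"
  have finV: "finite V" using G by (simp add: perm_group_def)
  have "finite ?stabs" "?stabs \<noteq> {}"
    using finV \<open>V \<noteq> {}\<close> by (simp_all add: Setcompr_eq_image)
  then have "Max ?stabs \<in> ?stabs" by (rule Max_in)
  then obtain v0 where v0: "v0 \<in> V" and M: "Max ?stabs = card (stabilizer G v0)"
    by blast
  have stab_intersecting: "intersecting V (stabilizer G v0)"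
    unfolding intersecting_def
  proof (intro ballI)
    fix g h assume "g \<in> stabilizer G v0" "h \<in> stabilizer G v0"
    then have "g v0 = h v0" by (simp add: stabilizer_def)
    then show "\<exists>v\<in>V. g v = h v" using v0 by blast
  qed
  have "Max ?families = card (stabilizer G v0)"
  proof (rule Max_eqI)
    have "?families \<subseteq> {..card G}"
      using card_mono[OF perm_group_finite[OF G]] by blast
    then show "finite ?families" by (rule finite_subset) simp
    show "n \<le> card (stabilizer G v0)" if n: "n \<in> ?families" for n
    proof -
      obtain F where "n = card F" "F \<subseteq> G" "intersecting V F" using n by blast
      then obtain v where "v \<in> V" "n \<le> card (stabilizer G v)" using bound by blast
      moreover have "card (stabilizer G v) \<le> Max ?stabs"
        using \<open>v \<in> V\<close> \<open>finite ?stabs\<close> by (intro Max_ge) auto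
      ultimately show ?thesis using M by linarith
    qed
    show "card (stabilizer G v0) \<in> ?families"
      using stab_intersecting by (auto simp: stabilizer_def)
  qed
  moreover have "card (stabilizer G v0) > 0"
    using G perm_group_finite[OF G]
    by (auto simp: card_gt_0_iff stabilizer_def perm_group_def)
  ultimately show ?thesis unfolding intersection_density_def M by simp
qed

lemma funpow_fixed_point: "\<phi> u = u \<Longrightarrow> (\<phi> ^^ k) u = u"
  by (induction k) simp_all

lemma funpow_period:
  fixes \<phi> :: "'b \<Rightarrow> 'b"
  assumes "(\<phi> ^^ n) w = w" "0 < n"
  obtains d where "0 < d" "\<And>k. (\<phi> ^^ k) w = w \<longleftrightarrow> d dvd k"
    "range (\<lambda>k. (\<phi> ^^ k) w) = (\<lambda>k. (\<phi> ^^ k) w) ` {..<d}" "inj_on (\<lambda>k. (\<phi> ^^ k) w) {..<d}"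
proof -
  define d where "d = (LEAST k. 0 < k \<and> (\<phi> ^^ k) w = w)"
  have d: "0 < d" "(\<phi> ^^ d) w = w"
    using LeastI[of "\<lambda>k. 0 < k \<and> (\<phi> ^^ k) w = w" n] assms by (simp_all add: d_def)
  have below_d: "(\<phi> ^^ k) w \<noteq> w" if "0 < k" "k < d" for k
    using not_less_Least[of k "\<lambda>k. 0 < k \<and> (\<phi> ^^ k) w = w"] that by (simp add: d_def)
  have multiple: "(\<phi> ^^ (d * m)) w = w" for m
    by (induction m) (use d in \<open>simp_all add: funpow_add\<close>)
  have mod_d: "(\<phi> ^^ k) w = (\<phi> ^^ (k mod d)) w" for k
  proof -
    have "(\<phi> ^^ k) w = (\<phi> ^^ (k mod d)) ((\<phi> ^^ (d * (k div d))) w)"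
      by (simp flip: funpow_add comp_apply[of "\<phi> ^^ (k mod d)"])
    then show ?thesis by (simp add: multiple)
  qed
  have "(\<phi> ^^ k) w = w \<longleftrightarrow> d dvd k" for k
    using below_d[of "k mod d"] mod_d[of k] d(1) multiple by (auto simp: dvd_eq_mod_eq_0)
  moreover have "range (\<lambda>k. (\<phi> ^^ k) w) = (\<lambda>k. (\<phi> ^^ k) w) ` {..<d}"
  proof (intro equalityI subsetI)
    fix v assume "v \<in> range (\<lambda>k. (\<phi> ^^ k) w)"
    then obtain k where "v = (\<phi> ^^ (k mod d)) w" using mod_d by auto
    then show "v \<in> (\<lambda>k. (\<phi> ^^ k) w) ` {..<d}" using d(1) by auto
  qed auto
  moreover have "inj_on (\<lambda>k. (\<phi> ^^ k) w) {..<d}"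
  proof (rule inj_onI)
    have collision: False if "i < j" "j < d" "(\<phi> ^^ i) w = (\<phi> ^^ j) w" for i j
    proof -
      have "(\<phi> ^^ (d - j + i)) w = (\<phi> ^^ (d - j)) ((\<phi> ^^ j) w)"
        using that(3) by (simp add: funpow_add)
      also have "\<dots> = w"
        using that(2) d(2) by (simp flip: funpow_add comp_apply[of "\<phi> ^^ (d - j)"])
      finally have "(\<phi> ^^ (d - j + i)) w = w" .
      moreover have "0 < d - j + i" "d - j + i < d" using that(1,2) by linarith+
      ultimately show False using below_d[of "d - j + i"] by simp
    qed
    fix i j assume "i \<in> {..<d}" "j \<in> {..<d}" and eq: "(\<phi> ^^ i) w = (\<phi> ^^ j) w"
    then have "i < d" "j < d" by simp_all
    then show "i = j"
      using collision[of i j, OF _ _ eq] collision[of j i, OF _ _ eq[symmetric]]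
      by (cases i j rule: linorder_cases) blast+
  qed
  ultimately show ?thesis using that d(1) by blast
qed

lemma funpow_prime_power_period:
  fixes \<phi> :: "'b \<Rightarrow> 'b"
  assumes "(\<phi> ^^ (r ^ a)) w = w" "prime r"
    and X: "finite X" "\<And>k. (\<phi> ^^ k) w \<in> X" "card X \<le> r" and moved: "\<phi> w \<noteq> w"
  shows "card X = r" "X = range (\<lambda>k. (\<phi> ^^ k) w)" "(\<phi> ^^ k) w = w \<longleftrightarrow> r dvd k"
proof -
  have "1 < r" using assms(2) by (rule prime_gt_1_nat)
  obtain d where d: "0 < d" "\<And>k. (\<phi> ^^ k) w = w \<longleftrightarrow> d dvd k"
    and orbit: "range (\<lambda>k. (\<phi> ^^ k) w) = (\<lambda>k. (\<phi> ^^ k) w) ` {..<d}"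
    and inj: "inj_on (\<lambda>k. (\<phi> ^^ k) w) {..<d}"
    using funpow_period[OF assms(1)] assms(2) by (metis prime_gt_0_nat zero_less_power)
  have card_orbit: "card (range (\<lambda>k. (\<phi> ^^ k) w)) = d"
    using orbit inj by (simp add: card_image)
  have "range (\<lambda>k. (\<phi> ^^ k) w) \<subseteq> X" using X(2) by blast
  then have "d \<le> card X" using card_mono[OF X(1)] card_orbit by metis
  obtain i where i: "d = r ^ i"
    using d(2)[of "r ^ a"] assms(1,2) divides_primepow_nat by blast
  have "i \<noteq> 0" using d(2)[of 1] moved i by auto
  moreover have "i \<le> 1"
    using \<open>d \<le> card X\<close> X(3) i \<open>1 < r\<close> by (metis le_trans power_one_right power_le_imp_le_exp)
  ultimately have "d = r" using i by (cases i) auto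
  then show "card X = r" using \<open>d \<le> card X\<close> X(3) by simp
  then show "X = range (\<lambda>k. (\<phi> ^^ k) w)"
    using \<open>range (\<lambda>k. (\<phi> ^^ k) w) \<subseteq> X\<close> card_orbit \<open>d = r\<close> X(1)
    by (metis card_subset_eq)
  show "(\<phi> ^^ k) w = w \<longleftrightarrow> r dvd k" using d(2) \<open>d = r\<close> by simp
qed

lemma funpow_prime_power_fixed_if_card_less:
  fixes \<phi> :: "'b \<Rightarrow> 'b"
  assumes "(\<phi> ^^ (r ^ a)) w = w" "prime r"
    and "finite X" "\<And>k. (\<phi> ^^ k) w \<in> X" "card X < r"
  shows "\<phi> w = w"
  using funpow_prime_power_period(1)[OF assms(1-4)] assms(5) by fastforce

lemma funpow_prime_power_fixed_if_fixes_point: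
  fixes \<phi> :: "'b \<Rightarrow> 'b"
  assumes "(\<phi> ^^ (r ^ a)) w = w" "prime r"
    and X: "finite X" "\<And>k. (\<phi> ^^ k) w \<in> X" "card X \<le> r"
    and u: "u \<in> X" "\<phi> u = u"
  shows "\<phi> w = w"
proof (rule ccontr)
  assume moved: "\<phi> w \<noteq> w"
  note period = funpow_prime_power_period[OF assms(1-2) X moved]
  obtain k where k: "u = (\<phi> ^^ k) w" using u(1) period(2) by blast
  \<comment> \<open>Going once around the cycle from u lands on w, but u is fixed.\<close>
  have "w = (\<phi> ^^ (r * k)) w" using period(3)[of "r * k"] by simp
  also have "r * k = (r - 1) * k + k"
    using prime_gt_0_nat[OF \<open>prime r\<close>] by (cases r) auto
  also have "(\<phi> ^^ ((r - 1) * k + k)) w = (\<phi> ^^ ((r - 1) * k)) u"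
    by (simp add: funpow_add k)
  also have "\<dots> = u" using u(2) by (rule funpow_fixed_point)
  finally show False using moved u(2) by simp
qed

lemma funpow_eq_imp_eq_below_period:
  fixes \<phi> :: "'b \<Rightarrow> 'b"
  assumes "inj \<phi>" and period: "\<And>k. (\<phi> ^^ k) w = w \<longleftrightarrow> n dvd k"
    and "i < n" "j < n" and eq: "(\<phi> ^^ i) w = (\<phi> ^^ j) w"
  shows "i = j"
proof -
  have ordered: "i = j" if le: "i \<le> j" "j < n" and eq: "(\<phi> ^^ i) w = (\<phi> ^^ j) w" for i j
  proof -
    have "(\<phi> ^^ i) ((\<phi> ^^ (j - i)) w) = (\<phi> ^^ i) w"
      using le(1) eq by (simp flip: funpow_add comp_apply[of "\<phi> ^^ i"])
    then have "(\<phi> ^^ (j - i)) w = w" using inj_fn[OF \<open>inj \<phi>\<close>] by (simp add: inj_eq)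
    then have "n dvd j - i" using period by blast
    moreover have "j - i < n" using le by linarith
    ultimately have "j - i = 0" using dvd_imp_le[of n "j - i"] by (cases "j - i") auto
    then show "i = j" using le by simp
  qed
  show ?thesis
  proof (cases "i \<le> j")
    case True
    then show ?thesis using ordered assms(4) eq by blast
  next
    case False
    then show ?thesis using ordered[of j i] assms(3) eq by simp
  qed
qed

lemma sylow_orbit_card:
  assumes K: "perm_group V K" and r: "prime r" and f: "perm_action f"
    and sylow: "sylow_subgroup V K r S"
    and index: "r * card {g\<in>K. f g u = u} dvd card K"
    and X: "finite X" "card X \<le> r" "(\<lambda>g. f g u) ` S \<subseteq> X"
  shows "card S = r * card {g\<in>S. f g u = u}"
proof -
  have S: "perm_group V S" "S \<subseteq> K" "card S = r ^ multiplicity r (card K)"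
    using sylow by (simp_all add: sylow_subgroup_def)
  let ?orbit = "(\<lambda>g. f g u) ` S"
  let ?m = "multiplicity r (card K)"
  have orbit_stab: "card S = card ?orbit * card {g\<in>S. f g u = u}"
    by (rule orbit_stabilizer[OF S(1) f])
  then have "card ?orbit dvd r ^ ?m" using S(3) by (metis dvd_triv_left)
  then obtain i where i: "card ?orbit = r ^ i" using divides_primepow_nat[OF r] by blast
  have "1 < r" using r by (rule prime_gt_1_nat)
  have "card ?orbit \<le> r" using card_mono[OF X(1) X(3)] X(2) by linarith
  then have "i \<le> 1" using i \<open>1 < r\<close> by (metis power_one_right power_le_imp_le_exp)
  moreover have "i \<noteq> 0"
  proof
    assume "i = 0"
    then have "card ?orbit = 1" using i by simp
    then obtain z where z: "?orbit = {z}" by (rule card_1_singletonE)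
    have "id \<in> S" using S(1) by (simp add: perm_group_def)
    then have "u \<in> ?orbit" using f by (auto simp: perm_action_def intro: image_eqI[of _ _ id])
    then have "?orbit = {u}" using z by simp
    then have "S \<subseteq> {g\<in>K. f g u = u}" using S(2) by blast
    then have "r ^ ?m dvd card {g\<in>K. f g u = u}"
      using perm_group_card_dvd[OF perm_group_stabilizer[OF K f] S(1)] S(3) by simp
    then have "r ^ Suc ?m dvd r * card {g\<in>K. f g u = u}"
      by (simp add: mult_dvd_mono)
    then have "r ^ Suc ?m dvd card K" using index by (rule dvd_trans)
    moreover have "card K \<noteq> 0"
      using K perm_group_finite[OF K] by (auto simp: perm_group_def)
    ultimately show False
      using power_dvd_iff_le_multiplicity[of "card K" r "Suc ?m"] \<open>1 < r\<close> by simp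
  qed
  ultimately have "card ?orbit = r" using i by (cases i) auto
  then show ?thesis using orbit_stab by simp
qed

locale pq_imprimitive =
  fixes V :: "'a set" and G H :: "('a \<Rightarrow> 'a) set" and p q :: nat and P :: "'a set set"
  assumes prime_p: "prime p" and prime_q: "prime q" and q_less_p: "q < p"
    and perm_group_G: "perm_group V G" and transitive_G: "transitive_on V G"
    and card_V: "card V = p * q"
    and perm_group_H: "perm_group V H" and H_subset_G: "H \<subseteq> G" and transitive_H: "transitive_on V H"
    and blocks: "block_system V H P q p"
begin

lemma V_nonempty: "V \<noteq> {}"
  using card_V prime_gt_0_nat[OF prime_p] prime_gt_0_nat[OF prime_q] by auto

lemma block_subset: "B \<in> P \<Longrightarrow> B \<subseteq> V"
  using blocks unfolding block_system_def by blast

lemma card_block: "B \<in> P \<Longrightarrow> card B = p"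
  using blocks unfolding block_system_def by blast

lemma block_nonempty: "B \<in> P \<Longrightarrow> B \<noteq> {}"
  using card_block prime_gt_0_nat[OF prime_p] by fastforce

lemma finite_V: "finite V"
  using perm_group_H by (simp add: perm_group_def)

lemma finite_block: "B \<in> P \<Longrightarrow> finite B"
  using block_subset finite_V by (rule finite_subset)

lemma finite_blocks: "finite P"
proof (rule finite_subset)
  show "P \<subseteq> Pow V" using block_subset by blast
qed (simp add: finite_V)

lemma card_blocks: "card P = q"
  using blocks unfolding block_system_def by blast

lemma block_eqI: "B \<in> P \<Longrightarrow> C \<in> P \<Longrightarrow> v \<in> B \<Longrightarrow> v \<in> C \<Longrightarrow> B = C"
  using blocks unfolding block_system_def by blast

lemma block_exists: "v \<in> V \<Longrightarrow> \<exists>B\<in>P. v \<in> B"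
  using blocks unfolding block_system_def by blast

lemma image_block: "h \<in> H \<Longrightarrow> B \<in> P \<Longrightarrow> h ` B \<in> P"
  using blocks unfolding block_system_def by blast

lemma funpow_image_block: "h \<in> H \<Longrightarrow> B \<in> P \<Longrightarrow> ((\<lambda>B. h ` B) ^^ k) B \<in> P"
  using image_block perm_group_funpow_closed[OF perm_group_H]
  by (simp add: perm_action_funpow[OF perm_action_image])

lemma card_H_block_stabilizer:
  assumes B: "B \<in> P"
  shows "card H = q * card {g\<in>H. g ` B = B}"
proof -
  have "(\<lambda>g. g ` B) ` H = P"
  proof (intro equalityI subsetI)
    fix C assume C: "C \<in> P"
    obtain u w where u: "u \<in> B" and w: "w \<in> C"
      using block_nonempty[OF B] block_nonempty[OF C] by blast
    then obtain h where h: "h \<in> H" "h u = w"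
      using transitive_H block_subset B C unfolding transitive_on_def by blast
    then have "h ` B = C" using block_eqI[OF image_block[OF h(1) B] C] u w by blast
    then show "C \<in> (\<lambda>g. g ` B) ` H" using h(1) by blast
  qed (use image_block B in blast)
  then show ?thesis
    using orbit_stabilizer[OF perm_group_H perm_action_image, of B] card_blocks by simp
qed

lemma card_H_point_stabilizer: "v \<in> V \<Longrightarrow> card H = p * q * card (stabilizer H v)"
  using card_transitive_perm_group[OF perm_group_H transitive_H] card_V by simp

lemma p_element_fixes_blocks:
  assumes g: "g \<in> H" "g ^^ (p ^ a) = id" and B: "B \<in> P"
  shows "g ` B = B"
proof -
  have "((\<lambda>B. g ` B) ^^ (p ^ a)) B = B"
    using g(2) by (simp add: perm_action_funpow[OF perm_action_image])
  then show ?thesis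
    using funpow_prime_power_fixed_if_card_less[OF _ prime_p finite_blocks
        funpow_image_block[OF g(1) B]]
      card_blocks q_less_p by blast
qed

lemma sylow_p_fixes_blocks:
  assumes S: "sylow_subgroup V H p S" and g: "g \<in> S" and B: "B \<in> P"
  shows "(g ^^ k) ` B = B"
proof -
  have "perm_group V S" using S by (simp add: sylow_subgroup_def)
  then have "g ^^ k \<in> S" using g by (rule perm_group_funpow_closed)
  then have "g ^^ k \<in> H" "(g ^^ k) ^^ (p ^ multiplicity p (card H)) = id"
    using S sylow_subgroup_funpow_eq_id[OF S] by (auto simp: sylow_subgroup_def)
  then show ?thesis using p_element_fixes_blocks B by blast
qed

lemma sylow_p_card_point_stabilizer:
  assumes S: "sylow_subgroup V H p S" and v: "v \<in> V"
  shows "card S = p * card (stabilizer S v)"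
proof -
  obtain B where B: "B \<in> P" "v \<in> B" using block_exists[OF v] by blast
  have "p * card {g\<in>H. g v = v} dvd card H"
    using card_H_point_stabilizer[OF v] by (simp add: stabilizer_def)
  moreover have "(\<lambda>g. g v) ` S \<subseteq> B"
    using sylow_p_fixes_blocks[OF S _ B(1), where k=1] B(2) by auto
  ultimately show ?thesis
    using sylow_orbit_card[OF perm_group_H prime_p perm_action_apply S _ finite_block[OF B(1)]]
      card_block[OF B(1)] by (simp add: stabilizer_def)
qed

lemma sylow_p_fixed_point_free:
  assumes S: "sylow_subgroup V H p S"
  obtains x where "x \<in> S" "\<And>v. v \<in> V \<Longrightarrow> x v \<noteq> v"
proof -
  define s where "s = card S div p"
  have card_stabilizer: "card (stabilizer S v) = s" if "v \<in> V" for v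
    using sylow_p_card_point_stabilizer[OF S that] prime_gt_0_nat[OF prime_p] by (simp add: s_def)
  obtain v0 where "v0 \<in> V" using V_nonempty by blast
  have "0 < card S"
    using S perm_group_finite[of V S] prime_gt_0_nat[OF prime_p]
    by (auto simp: sylow_subgroup_def perm_group_def card_gt_0_iff)
  then have "0 < s" "card S = p * s"
    using sylow_p_card_point_stabilizer[OF S \<open>v0 \<in> V\<close>] card_stabilizer[OF \<open>v0 \<in> V\<close>] by simp_all
  obtain rep where rep: "\<And>B. B \<in> P \<Longrightarrow> rep B \<in> B" using block_nonempty by (metis ex_in_conv)
  \<comment> \<open>An element of S fixing a point fixes the representative of its block, so at most q s
    of the p s elements of S have a fixed point.\<close>
  let ?fixers = "{g\<in>S. \<exists>v\<in>V. g v = v}"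
  have "?fixers \<subseteq> (\<Union>B\<in>P. stabilizer S (rep B))"
  proof
    fix g assume "g \<in> ?fixers"
    then obtain v where g: "g \<in> S" and v: "v \<in> V" "g v = v" by blast
    obtain B where B: "B \<in> P" "v \<in> B" using block_exists[OF v(1)] by blast
    have "g (rep B) = rep B"
      using funpow_prime_power_fixed_if_fixes_point[where \<phi>=g and a="multiplicity p (card H)"
          and w="rep B" and X=B and u=v,
          OF _ prime_p finite_block[OF B(1)]] sylow_subgroup_funpow_eq_id[OF S g]
        sylow_p_fixes_blocks[OF S g B(1)] rep[OF B(1)] card_block[OF B(1)] B(2) v(2) by auto
    then show "g \<in> (\<Union>B\<in>P. stabilizer S (rep B))" using g B(1) by (auto simp: stabilizer_def)
  qed
  then have "card ?fixers \<le> card (\<Union>B\<in>P. stabilizer S (rep B))"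
    using perm_group_finite[of V S] S finite_blocks
    by (intro card_mono) (auto simp: sylow_subgroup_def stabilizer_def)
  also have "\<dots> \<le> (\<Sum>B\<in>P. card (stabilizer S (rep B)))"
    using finite_blocks by (rule card_UN_le)
  also have "\<dots> = q * s"
    using card_stabilizer rep block_subset card_blocks by (simp add: subset_iff)
  also have "\<dots> < card S"
    using q_less_p \<open>0 < s\<close> \<open>card S = p * s\<close> by simp
  finally have "?fixers \<noteq> S" by (metis less_irrefl)
  then show ?thesis using that by blast
qed

lemma exists_semiregular_p_element:
  obtains x where "x \<in> H" "\<And>B. B \<in> P \<Longrightarrow> x ` B = B" "\<And>v k. v \<in> V \<Longrightarrow> (x ^^ k) v = v \<longleftrightarrow> p dvd k"
proof -
  obtain S where S: "sylow_subgroup V H p S"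
    using perm_group_sylow[OF perm_group_H prime_p] by blast
  obtain x where x: "x \<in> S" "\<And>v. v \<in> V \<Longrightarrow> x v \<noteq> v"
    using sylow_p_fixed_point_free[OF S] by blast
  have "(x ^^ k) v = v \<longleftrightarrow> p dvd k" if v: "v \<in> V" for v k
  proof -
    obtain B where B: "B \<in> P" "v \<in> B" using block_exists[OF v] by blast
    have "((x ^^ j) v) \<in> B" for j using sylow_p_fixes_blocks[OF S x(1) B(1)] B(2) by blast
    then show ?thesis
      using funpow_prime_power_period(3)[where \<phi>=x and a="multiplicity p (card H)" and w=v and X=B,
          OF _ prime_p finite_block[OF B(1)]]
        sylow_subgroup_funpow_eq_id[OF S x(1)] card_block[OF B(1)] x(2)[OF v] by auto
  qed
  then show ?thesis
    using that x(1) S sylow_p_fixes_blocks[OF S x(1), where k=1] by (auto simp: sylow_subgroup_def)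
qed

lemma exists_block_cycling_q_element:
  obtains y where "y \<in> H" "\<And>C k. C \<in> P \<Longrightarrow> (y ^^ k) ` C = C \<longleftrightarrow> q dvd k"
proof -
  define b where "b = multiplicity q (card H)"
  obtain S where sylow: "sylow_subgroup V H q S"
    using perm_group_sylow[OF perm_group_H prime_q] by blast
  then have S: "perm_group V S" "S \<subseteq> H" by (simp_all add: sylow_subgroup_def)
  have order: "((\<lambda>B. g ` B) ^^ (q ^ b)) B = B" if "g \<in> S" for g B
    using sylow_subgroup_funpow_eq_id[OF sylow that]
    by (simp add: b_def perm_action_funpow[OF perm_action_image])
  have in_blocks: "((\<lambda>B. g ` B) ^^ k) B \<in> P" if "g \<in> S" "B \<in> P" for g k B
    using funpow_image_block that S(2) by blast
  obtain B0 where B0: "B0 \<in> P" using V_nonempty block_exists by blast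
  have "q * card {g\<in>H. g ` B0 = B0} dvd card H"
    using card_H_block_stabilizer[OF B0] by simp
  moreover have "(\<lambda>g. g ` B0) ` S \<subseteq> P" using image_block B0 S(2) by blast
  ultimately have "card S = q * card {g\<in>S. g ` B0 = B0}"
    using sylow_orbit_card[OF perm_group_H prime_q perm_action_image sylow _ finite_blocks]
      card_blocks by simp
  moreover have "0 < card {g\<in>S. g ` B0 = B0}"
    using S(1) perm_group_finite[OF S(1)] by (auto simp: perm_group_def card_gt_0_iff)
  ultimately have "{g\<in>S. g ` B0 = B0} \<noteq> S"
    using prime_gt_1_nat[OF prime_q] by (metis less_irrefl_nat mult_less_cancel2 nat_mult_1)
  then obtain y where y: "y \<in> S" "y ` B0 \<noteq> B0" by blast
  \<comment> \<open>Fixing any block would force y to fix B0 as well.\<close>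
  have "y ` C \<noteq> C" if "C \<in> P" for C
    using funpow_prime_power_fixed_if_fixes_point[where \<phi>="\<lambda>B. y ` B" and a=b and w=B0 and X=P
        and u=C, OF order[OF y(1)] prime_q finite_blocks in_blocks[OF y(1) B0]]
      card_blocks that y(2) by auto
  then have "(y ^^ k) ` C = C \<longleftrightarrow> q dvd k" if "C \<in> P" for C k
    using funpow_prime_power_period(3)[where \<phi>="\<lambda>B. y ` B" and a=b and w=C and X=P,
        OF order[OF y(1)] prime_q finite_blocks in_blocks[OF y(1) that]]
      card_blocks that by (simp add: perm_action_funpow[OF perm_action_image])
  then show ?thesis using that y(1) S(2) by blast
qed

lemma clique_apart:
  assumes x: "x \<in> H" "\<And>B. B \<in> P \<Longrightarrow> x ` B = B" "\<And>v k. v \<in> V \<Longrightarrow> (x ^^ k) v = v \<longleftrightarrow> p dvd k"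
    and y: "y \<in> H" "\<And>C k. C \<in> P \<Longrightarrow> (y ^^ k) ` C = C \<longleftrightarrow> q dvd k"
    and bounds: "i < p" "j < q" "k < p" "l < q" and v: "v \<in> V"
    and eq: "(x ^^ i) ((y ^^ j) v) = (x ^^ k) ((y ^^ l) v)"
  shows "i = k" "j = l"
proof -
  have perm: "h permutes V" if "h \<in> H" for h using perm_group_permutes[OF perm_group_H that] .
  obtain B where B: "B \<in> P" "v \<in> B" using block_exists[OF v] by blast
  have x_blocks: "(x ^^ n) ` C = C" if "C \<in> P" for n C
    using funpow_fixed_point[of "\<lambda>B. x ` B" C n] x(2)[OF that]
    by (simp add: perm_action_funpow[OF perm_action_image])
  have y_blocks: "(y ^^ n) ` B \<in> P" for n
    using funpow_image_block[OF y(1) B(1), of n]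
    by (simp add: perm_action_funpow[OF perm_action_image])
  \<comment> \<open>Powers of x fix every block, so the common value lies in both image blocks.\<close>
  have "(x ^^ i) ((y ^^ j) v) \<in> (y ^^ j) ` B" "(x ^^ k) ((y ^^ l) v) \<in> (y ^^ l) ` B"
    using x_blocks[OF y_blocks] B(2) by blast+
  then have "((\<lambda>B. y ` B) ^^ j) B = ((\<lambda>B. y ` B) ^^ l) B"
    using block_eqI[OF y_blocks y_blocks] eq by (simp add: perm_action_funpow[OF perm_action_image])
  then show "j = l"
    using funpow_eq_imp_eq_below_period[where \<phi>="\<lambda>B. y ` B" and w=B and n=q]
      y(2)[OF B(1)] bounds(2,4) inj_on_image[of y UNIV] permutes_inj[OF perm[OF y(1)]]
    by (simp add: perm_action_funpow[OF perm_action_image])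
  then have "(x ^^ i) ((y ^^ j) v) = (x ^^ k) ((y ^^ j) v)" using eq by simp
  moreover have "(y ^^ j) v \<in> V"
    using perm[OF perm_group_funpow_closed[OF perm_group_H y(1)]] v by (simp add: permutes_in_image)
  ultimately show "i = k"
    using funpow_eq_imp_eq_below_period[where \<phi>=x and w="(y ^^ j) v" and n=p]
      x(3) bounds(1,3) permutes_inj[OF perm[OF x(1)]] by blast
qed

lemma card_intersecting_le_stabilizer:
  assumes F: "F \<subseteq> G" "intersecting V F" and v: "v \<in> V"
  shows "card F \<le> card (stabilizer G v)"
proof -
  obtain x where x: "x \<in> H" "\<And>B. B \<in> P \<Longrightarrow> x ` B = B"
    "\<And>v k. v \<in> V \<Longrightarrow> (x ^^ k) v = v \<longleftrightarrow> p dvd k"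
    using exists_semiregular_p_element by blast
  obtain y where y: "y \<in> H" "\<And>C k. C \<in> P \<Longrightarrow> (y ^^ k) ` C = C \<longleftrightarrow> q dvd k"
    using exists_block_cycling_q_element by blast
  define c where "c = (\<lambda>(i, j). x ^^ i \<circ> y ^^ j)"
  have "x ^^ i \<circ> y ^^ j \<in> H" for i j
    using perm_group_funpow_closed[OF perm_group_H] x(1) y(1) perm_group_H
    by (simp add: perm_group_def)
  then have "c ` ({..<p} \<times> {..<q}) \<subseteq> G"
    using H_subset_G by (auto simp: c_def)
  moreover have "ij = kl"
    if "ij \<in> {..<p} \<times> {..<q}" "kl \<in> {..<p} \<times> {..<q}" "w \<in> V" "c ij w = c kl w" for ij kl w
    using clique_apart[OF x y] that by (auto simp: c_def)
  ultimately have "card F * (p * q) \<le> card G"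
    using intersecting_card_mult_le[OF perm_group_G, of "{..<p} \<times> {..<q}" c] F
    by (simp add: card_cartesian_product)
  also have "\<dots> = p * q * card (stabilizer G v)"
    using card_transitive_perm_group[OF perm_group_G transitive_G v] card_V by simp
  finally show ?thesis
    using prime_gt_0_nat[OF prime_p] prime_gt_0_nat[OF prime_q] by simp
qed

end

theorem proposition2p1:
  fixes V :: "'a set" and G H :: "('a \<Rightarrow> 'a) set" and p q :: nat
  assumes "prime p" and "prime q" and "p > q"
    and "perm_group V G" and "transitive_on V G" and "card V = p * q"
    and "perm_group V H" and "H \<subseteq> G" and "transitive_on V H"
    and "\<exists>P. block_system V H P q p"
  shows "intersection_density V G = 1"
proof -
  obtain P where "block_system V H P q p" using assms(10) by blast
  then interpret pq_imprimitive V G H p q P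
    using assms(1-9) by unfold_locales
  show ?thesis
  proof (rule intersection_density_eq_1I[OF perm_group_G V_nonempty])
    fix F assume "F \<subseteq> G" "intersecting V F"
    then show "\<exists>v\<in>V. card F \<le> card (stabilizer G v)"
      using card_intersecting_le_stabilizer V_nonempty by blast
  qed
qed

end
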